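(* Fix $\alpha\in\mathbb{R}^*\setminus\{\pm1\}$ and let $L=\mathbb{Z}\ltimes\mathbb{R}$ be the Lie group (with $\mathbb{Z}$ discrete) in which $(z,0)(0,r)(-z,0)=(0,\alpha^z r)$ for $z\in\mathbb{Z}$, $r\in\mathbb{R}$. Then $L$ has the topological $R_\infty$-property.
   Context: For an automorphism $\varphi$ of a group $G$, the $\varphi$-twisted conjugacy classes are the equivalence classes of the relation $x\sim_\varphi y$ iff $y=gx\varphi(g)^{-1}$ for some $g\in G$; $R(\varphi)\in\mathbb{N}\cup\{\infty\}$ is the number of these classes. A topological group $G$ has the topological $R_\infty$-property if $R(\varphi)=\infty$ for every automorphism $\varphi$ of $G$ that is a homeomorphism (for a Lie group: every continuous automorphism). *)

theory Defs
  imports "HOL-Analysis.Analysis"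
begin

text \<open>The semidirect product L = Z \<ltimes> R, elements (z, r) :: int \<times> real, with
  (z1,r1)(z2,r2) = (z1+z2, r1 + alpha^z1 r2), so that (z,0)(0,r)(-z,0) = (0, alpha^z r).
  Topology: product topology of int (discrete) and real.\<close>

definition Lmult :: "real \<Rightarrow> int \<times> real \<Rightarrow> int \<times> real \<Rightarrow> int \<times> real" where
  "Lmult \<alpha> p q = (fst p + fst q, snd p + \<alpha> powi (fst p) * snd q)"

definition Linv :: "real \<Rightarrow> int \<times> real \<Rightarrow> int \<times> real" where
  "Linv \<alpha> p = (- fst p, - (\<alpha> powi (- fst p)) * snd p)"

definition L_automorphism :: "real \<Rightarrow> (int \<times> real \<Rightarrow> int \<times> real) \<Rightarrow> bool" where
  "L_automorphism \<alpha> \<phi> \<longleftrightarrow> bij \<phi> \<and> (\<forall>x y. \<phi> (Lmult \<alpha> x y) = Lmult \<alpha> (\<phi> x) (\<phi> y))"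

definition L_homeomorphic_automorphism :: "real \<Rightarrow> (int \<times> real \<Rightarrow> int \<times> real) \<Rightarrow> bool" where
  "L_homeomorphic_automorphism \<alpha> \<phi> \<longleftrightarrow>
     L_automorphism \<alpha> \<phi> \<and> continuous_on UNIV \<phi> \<and> continuous_on UNIV (inv \<phi>)"

definition twisted_rel :: "real \<Rightarrow> (int \<times> real \<Rightarrow> int \<times> real) \<Rightarrow> ((int \<times> real) \<times> (int \<times> real)) set" where
  "twisted_rel \<alpha> \<phi> = {(x, y). \<exists>g. y = Lmult \<alpha> (Lmult \<alpha> g x) (Linv \<alpha> (\<phi> g))}"

definition R_infinite :: "real \<Rightarrow> (int \<times> real \<Rightarrow> int \<times> real) \<Rightarrow> bool" where
  "R_infinite \<alpha> \<phi> \<longleftrightarrow> infinite (UNIV // twisted_rel \<alpha> \<phi>)"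

end

theory Submission
  imports Defs
begin

text \<open>A continuous automorphism \<phi> of L maps the identity component 0 \<times> \<real> to itself, hence
  induces an automorphism z \<mapsto> \<plusminus>z of the quotient \<int>. The sign -1 is impossible: conjugating
  by the generator (1, 0) shows that the restriction f of \<phi> to 0 \<times> \<real> satisfies
  f(\<alpha> r) = f(r) / \<alpha>, and for |\<alpha>| \<noteq> 1 iterating this and using continuity at 0 forces f = 0,
  contradicting injectivity. So \<phi> induces the identity on \<int>; the projection to \<int> is then
  constant on \<phi>-twisted conjugacy classes and surjective, so there are infinitely many classes.\<close>

lemma continuous_on_discrete_range_constant:
  fixes f :: "'a::topological_space \<Rightarrow> 'b::discrete_topology"
  assumes "connected S" and "continuous_on S f"
  shows "f constant_on S"
proof -
  have conn: "connected (f ` S)"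
    using assms(2,1) by (rule connected_continuous_image)
  have "f y = f x" if "x \<in> S" "y \<in> S" for x y
    using connectedD[OF conn, of "{f x}" "- {f x}"] that by (auto simp: open_discrete)
  then show ?thesis
    unfolding constant_on_def by metis
qed

lemma additive_int_eq_mult:
  fixes h :: "int \<Rightarrow> 'a::ring_1"
  assumes add: "\<And>a b. h (a + b) = h a + h b"
  shows "h z = of_int z * h 1"
proof (induction z rule: int_induct[where k = 0])
  case base
  show ?case using add[of 0 0] by simp
next
  case (step1 i)
  then show ?case by (simp add: add algebra_simps)
next
  case (step2 i)
  have "h i = h (i - 1) + h 1" using add[of "i - 1" 1] by simp
  with step2 show ?case by (simp add: algebra_simps)
qed

lemma continuous_inverse_homogeneous_eq_0:
  fixes f :: "real \<Rightarrow> 'a::real_normed_vector"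
  assumes cont: "continuous_on UNIV f" and "\<beta> \<noteq> 0" and "\<bar>\<beta>\<bar> \<noteq> 1"
    and homogeneous: "\<And>r. f (\<beta> * r) = inverse \<beta> *\<^sub>R f r"
  shows "f r = 0"
proof -
  have contracting: "f r = 0"
    if "\<bar>b\<bar> < 1" and "b \<noteq> 0" and hom_b: "\<And>r. f (b * r) = inverse b *\<^sub>R f r" for b
  proof -
    have iterate: "f r = b ^ n *\<^sub>R f (b ^ n * r)" for n
    proof (induction n)
      case (Suc n)
      have "f (b ^ Suc n * r) = inverse b *\<^sub>R f (b ^ n * r)"
        using hom_b[of "b ^ n * r"] by (simp add: mult.assoc)
      with Suc \<open>b \<noteq> 0\<close> show ?case by simp
    qed simp
    have powers: "(\<lambda>n. b ^ n) \<longlonglongrightarrow> 0"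
      using \<open>\<bar>b\<bar> < 1\<close> by (intro LIMSEQ_power_zero) simp
    then have "(\<lambda>n. b ^ n * r) \<longlonglongrightarrow> 0 * r"
      by (rule tendsto_mult_right)
    then have "(\<lambda>n. f (b ^ n * r)) \<longlonglongrightarrow> f (0 * r)"
      by (rule continuous_on_tendsto_compose[OF cont]) auto
    with powers have "(\<lambda>n. b ^ n *\<^sub>R f (b ^ n * r)) \<longlonglongrightarrow> 0 *\<^sub>R f (0 * r)"
      by (rule tendsto_scaleR)
    then show "f r = 0"
      using iterate by (simp add: LIMSEQ_const_iff)
  qed
  show ?thesis
  proof (cases "\<bar>\<beta>\<bar> < 1")
    case True
    then show ?thesis using contracting \<open>\<beta> \<noteq> 0\<close> homogeneous by blast
  next
    case False
    with \<open>\<bar>\<beta>\<bar> \<noteq> 1\<close> have "\<bar>inverse \<beta>\<bar> < 1"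
      by (simp add: abs_inverse inverse_less_1_iff)
    moreover have "f (inverse \<beta> * r) = inverse (inverse \<beta>) *\<^sub>R f r" for r
      using homogeneous[of "inverse \<beta> * r"] \<open>\<beta> \<noteq> 0\<close>
      by (simp add: mult.assoc[symmetric])
    ultimately show ?thesis
      using contracting[of "inverse \<beta>"] \<open>\<beta> \<noteq> 0\<close> by simp
  qed
qed

lemma infinite_quotient_of_invariant:
  fixes R :: "'a rel" and p :: "'a \<Rightarrow> 'b"
  assumes refl: "\<And>x. (x, x) \<in> R" and invariant: "\<And>x y. (x, y) \<in> R \<Longrightarrow> p y = p x"
    and "infinite (range p)"
  shows "infinite (UNIV // R)"
proof
  assume "finite (UNIV // R)"
  moreover have "finite (p ` X)" if "X \<in> UNIV // R" for X
  proof -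
    from that obtain x where "X = R `` {x}"
      by (rule quotientE)
    then have "p ` X \<subseteq> {p x}"
      using invariant by auto
    then show ?thesis
      by (rule finite_subset) simp
  qed
  ultimately have "finite (\<Union>X \<in> UNIV // R. p ` X)"
    by blast
  moreover have "range p \<subseteq> (\<Union>X \<in> UNIV // R. p ` X)"
    using refl by (auto simp: quotient_def)
  ultimately show False
    using \<open>infinite (range p)\<close> finite_subset by blast
qed

locale L_continuous_endomorphism =
  fixes \<alpha> :: real and \<phi> :: "int \<times> real \<Rightarrow> int \<times> real"
  assumes nonzero: "\<alpha> \<noteq> 0"
    and multiplicative: "\<And>x y. \<phi> (Lmult \<alpha> x y) = Lmult \<alpha> (\<phi> x) (\<phi> y)"
    and continuous: "continuous_on UNIV \<phi>"
begin

lemma map_unit: "\<phi> (0, 0) = (0, 0)"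
proof -
  obtain a b where ab: "\<phi> (0, 0) = (a, b)" by force
  have "Lmult \<alpha> (0, 0) (0, 0) = (0, 0)"
    by (simp add: Lmult_def)
  then have idempotent: "Lmult \<alpha> (a, b) (a, b) = (a, b)"
    by (metis ab multiplicative)
  then have "a = 0"
    by (simp add: Lmult_def)
  with idempotent ab show ?thesis
    by (simp add: Lmult_def)
qed

lemma twisted_rel_refl: "(x, x) \<in> twisted_rel \<alpha> \<phi>"
proof -
  have "x = Lmult \<alpha> (Lmult \<alpha> (0, 0) x) (Linv \<alpha> (\<phi> (0, 0)))"
    by (simp add: Lmult_def Linv_def map_unit)
  then show ?thesis unfolding twisted_rel_def by blast
qed

lemma continuous_on_line: "continuous_on UNIV (\<lambda>r. \<phi> (0, r))"
  by (intro continuous_on_compose2[OF continuous] continuous_intros) auto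

lemma fst_map_line: "fst (\<phi> (0, r)) = 0"
proof -
  have "continuous_on UNIV (\<lambda>r. fst (\<phi> (0, r)))"
    using continuous_on_line by (intro continuous_intros)
  then have "(\<lambda>r. fst (\<phi> (0, r))) constant_on UNIV"
    by (intro continuous_on_discrete_range_constant) simp_all
  then have "fst (\<phi> (0, r)) = fst (\<phi> (0, 0))"
    unfolding constant_on_def by auto
  then show ?thesis by (simp add: map_unit)
qed

lemma fst_map: "fst (\<phi> (z, r)) = z * fst (\<phi> (1, 0))"
proof -
  define h where "h z = fst (\<phi> (z, 0))" for z
  have "(z, r) = Lmult \<alpha> (z, 0) (0, \<alpha> powi (- z) * r)"
    using nonzero by (simp add: Lmult_def power_int_minus)
  then have "fst (\<phi> (z, r)) = h z"
    by (metis multiplicative fst_map_line h_def Lmult_def add.right_neutral fst_conv)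
  moreover have "h (a + b) = h a + h b" for a b
    using multiplicative[of "(a, 0)" "(b, 0)"] by (simp add: h_def Lmult_def)
  ultimately show ?thesis
    using additive_int_eq_mult[of h z] by (simp add: h_def)
qed

end

locale L_continuous_automorphism = L_continuous_endomorphism +
  assumes bij: "bij \<phi>"
begin

lemma fst_map_cases:
  obtains "\<And>z r. fst (\<phi> (z, r)) = z" | "\<And>z r. fst (\<phi> (z, r)) = - z"
proof -
  obtain x where "\<phi> x = (1, 0)"
    using bij by (metis bij_pointE)
  then have "fst x * fst (\<phi> (1, 0)) = 1"
    using fst_map[of "fst x" "snd x"] by simp
  then have "fst (\<phi> (1, 0)) = 1 \<or> fst (\<phi> (1, 0)) = -1"
    by (auto simp: zmult_eq_1_iff)
  then show ?thesis
    using that fst_map by (metis mult.right_neutral mult_minus1_right)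
qed

lemma fst_map_eq:
  assumes "\<bar>\<alpha>\<bar> \<noteq> 1"
  shows "fst (\<phi> x) = fst x"
proof (cases rule: fst_map_cases)
  case 1
  then show ?thesis by (metis prod.collapse)
next
  case reversing: 2
  define f where "f r = snd (\<phi> (0, r))" for r
  have line: "\<phi> (0, r) = (0, f r)" for r
    by (metis f_def fst_map_line prod.collapse)
  obtain b where b: "\<phi> (1, 0) = (-1, b)"
    by (metis reversing prod.collapse)
  have "f (\<alpha> * r) = inverse \<alpha> *\<^sub>R f r" for r
  proof -
    have "Lmult \<alpha> (1, 0) (0, r) = Lmult \<alpha> (0, \<alpha> * r) (1, 0)"
      by (simp add: Lmult_def)
    then have "Lmult \<alpha> (\<phi> (1, 0)) (\<phi> (0, r)) = Lmult \<alpha> (\<phi> (0, \<alpha> * r)) (\<phi> (1, 0))"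
      by (metis multiplicative)
    then show ?thesis by (simp add: b line Lmult_def)
  qed
  moreover have "continuous_on UNIV f"
    unfolding f_def using continuous_on_line by (intro continuous_intros)
  ultimately have "f r = 0" for r
    using continuous_inverse_homogeneous_eq_0 nonzero assms by blast
  then have "\<phi> (0, 1) = \<phi> (0, 0)"
    by (simp add: line)
  then show ?thesis
    using bij_is_inj[OF bij] by (simp add: inj_eq)
qed

lemma twisted_rel_fst:
  assumes "\<bar>\<alpha>\<bar> \<noteq> 1" and "(x, y) \<in> twisted_rel \<alpha> \<phi>"
  shows "fst y = fst x"
  using assms fst_map_eq unfolding twisted_rel_def by (auto simp: Lmult_def Linv_def)

lemma R_infinite:
  assumes "\<bar>\<alpha>\<bar> \<noteq> 1"
  shows "R_infinite \<alpha> \<phi>"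
  unfolding R_infinite_def
proof (rule infinite_quotient_of_invariant)
  show "infinite (range (fst :: int \<times> real \<Rightarrow> int))"
    by (simp add: range_fst)
qed (use twisted_rel_refl twisted_rel_fst assms in auto)

end

theorem mainTheorem7:
  fixes \<alpha> :: real
  assumes "\<alpha> \<noteq> 0" and "\<alpha> \<noteq> 1" and "\<alpha> \<noteq> -1"
  shows "\<forall>\<phi>. L_homeomorphic_automorphism \<alpha> \<phi> \<longrightarrow> R_infinite \<alpha> \<phi>"
proof (intro allI impI)
  fix \<phi> assume "L_homeomorphic_automorphism \<alpha> \<phi>"
  then interpret L_continuous_automorphism \<alpha> \<phi>
    using \<open>\<alpha> \<noteq> 0\<close>
    by unfold_locales (auto simp: L_homeomorphic_automorphism_def L_automorphism_def)
  have "\<bar>\<alpha>\<bar> \<noteq> 1"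
    using assms(2,3) by linarith
  then show "R_infinite \<alpha> \<phi>"
    by (rule R_infinite)
qed

end
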